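(* There exist absolute constants $c>0$ and $n_0$ such that for every integer $n\ge n_0$ and every $\varepsilon$ with $n^{-1/3} < \varepsilon < 1/2$, there exists an $n$-point set $X \subset \mathbb{R}$ such that every simultaneous $\varepsilon$-coreset of $X$ for $p$-Centrum with $k=1$ has size at least $c\,\varepsilon^{-1/2}\log n$.
   Context: For a finite multiset $Y\subset\mathbb{R}$ and a point $c\in\mathbb{R}$, $\mathrm{cost}_p(Y,c)$ is the sum of the $p$ largest values among $\{|y-c|\}_{y\in Y}$ (with multiplicity; the sum of all of them if $|Y|<p$). A coreset is a finite set of points with positive integer weights, viewed as a multiset; its size is the number of distinct points. A multiset $D\subset \mathbb{R}$ is a simultaneous $\varepsilon$-coreset of $X$ (with $|X|=n$) for $p$-Centrum with $k=1$ if for every $p\in\{1,\dots,n\}$ and every $c\in\mathbb{R}$, $(1-\varepsilon)\mathrm{cost}_p(X,c)\le\mathrm{cost}_p(D,c)\le(1+\varepsilon)\mathrm{cost}_p(X,c)$. *)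

theory Defs
  imports Complex_Main "HOL-Library.Multiset"
begin

definition cost :: "nat \<Rightarrow> real multiset \<Rightarrow> real \<Rightarrow> real" where
  "cost p Y c = sum_list (take p (rev (sorted_list_of_multiset (image_mset (\<lambda>y. \<bar>y - c\<bar>) Y))))"

text \<open>A coreset is a multiset (finite, positive integer weights); its size is the number of
  distinct points.\<close>
definition coreset_size :: "real multiset \<Rightarrow> nat" where
  "coreset_size D = card (set_mset D)"

definition simultaneous_coreset :: "real \<Rightarrow> real set \<Rightarrow> real multiset \<Rightarrow> bool" where
  "simultaneous_coreset eps X D \<longleftrightarrow>
     (\<forall>p\<in>{1..card X}. \<forall>c::real.
        (1 - eps) * cost p (mset_set X) c \<le> cost p D c \<and>
        cost p D c \<le> (1 + eps) * cost p (mset_set X) c)"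

end

theory Submission
  imports Defs
begin

(* The hard instance is X = {sqrt i - sqrt (i - 1) | 1 <= i <= n}: its p largest distances from the
   origin sum to sqrt p.  For a coreset D let E i be the (i+1)-st largest distance of D from the
   origin (0 once D is exhausted), so that the partial sums of E approximate sqrt p within a factor
   1 +- eps for every p <= n.  If E were constant on a window [u, w) with v >= s^2 u and w >= s^2 v,
   where s = 1 + 8 sqrt eps, these partial sums would be affine on [u, w], which the concavity of
   sqrt forbids at v.  About ln n / sqrt eps disjoint such windows fit along the geometric sequence
   T s^(5 k) below n, so E takes that many distinct values, each of which is 0 or the distance of a
   point of D. *)

definition dists_desc :: "real multiset \<Rightarrow> real \<Rightarrow> real list" where
  "dists_desc Y c = rev (sorted_list_of_multiset (image_mset (\<lambda>y. \<bar>y - c\<bar>) Y))"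

definition ranked_dist :: "real multiset \<Rightarrow> real \<Rightarrow> nat \<Rightarrow> real" where
  "ranked_dist Y c i = (if i < length (dists_desc Y c) then dists_desc Y c ! i else 0)"

lemma sum_list_take_eq_sum_padded:
  "sum_list (take p xs) = (\<Sum>i<p. if i < length xs then xs ! i else (0::'a::comm_monoid_add))"
proof (induction p)
  case (Suc p)
  then show ?case by (cases "p < length xs") (simp_all add: take_Suc_conv_app_nth)
qed simp

lemma cost_eq_sum_ranked_dist: "cost p Y c = (\<Sum>i<p. ranked_dist Y c i)"
  unfolding cost_def ranked_dist_def dists_desc_def by (rule sum_list_take_eq_sum_padded)

lemma ranked_dist_mem: "ranked_dist Y c i \<in> insert 0 ((\<lambda>y. \<bar>y - c\<bar>) ` set_mset Y)"
proof -
  have "set (dists_desc Y c) = (\<lambda>y. \<bar>y - c\<bar>) ` set_mset Y" by (simp add: dists_desc_def)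
  then show ?thesis unfolding ranked_dist_def by (auto dest: nth_mem)
qed

lemma ranked_dist_nonneg: "0 \<le> ranked_dist Y c i"
  using ranked_dist_mem[of Y c i] by auto

lemma antimono_ranked_dist: "antimono (ranked_dist Y c)"
proof (rule antimonoI)
  fix i j :: nat
  assume "i \<le> j"
  have "sorted (rev (dists_desc Y c))" by (simp add: dists_desc_def)
  then show "ranked_dist Y c j \<le> ranked_dist Y c i"
    using \<open>i \<le> j\<close> ranked_dist_nonneg[of Y c i]
    by (auto simp: ranked_dist_def intro: sorted_rev_nth_mono)
qed

lemma card_image_ranked_dist_le: "card (ranked_dist Y c ` A) \<le> Suc (card (set_mset Y))"
proof -
  have "ranked_dist Y c ` A \<subseteq> insert 0 ((\<lambda>y. \<bar>y - c\<bar>) ` set_mset Y)"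
    using ranked_dist_mem by (simp add: image_subset_iff)
  then have "card (ranked_dist Y c ` A) \<le> card (insert 0 ((\<lambda>y. \<bar>y - c\<bar>) ` set_mset Y))"
    by (simp add: card_mono)
  also have "\<dots> \<le> Suc (card ((\<lambda>y. \<bar>y - c\<bar>) ` set_mset Y))" by (simp add: card_insert_if)
  also have "\<dots> \<le> Suc (card (set_mset Y))" using card_image_le[of "set_mset Y"] by simp
  finally show ?thesis .
qed

lemma sum_lessThan_constant_tail:
  fixes E :: "nat \<Rightarrow> real"
  assumes "u \<le> p" and "\<And>i. u \<le> i \<Longrightarrow> i < p \<Longrightarrow> E i = E u"
  shows "(\<Sum>i<p. E i) = (\<Sum>i<u. E i) + real (p - u) * E u"
proof -
  have split: "{..<p} = {..<u} \<union> {u..<p}" using assms(1) by auto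
  have "(\<Sum>i<p. E i) = (\<Sum>i<u. E i) + (\<Sum>i=u..<p. E i)"
    unfolding split by (rule sum.union_disjoint) auto
  also have "(\<Sum>i=u..<p. E i) = (\<Sum>i=u..<p. E u)" by (rule sum.cong[OF refl], rule assms(2)) auto
  finally show ?thesis by simp
qed

lemma card_image_strict_decreasing_chain:
  fixes g :: "nat \<Rightarrow> real"
  assumes "\<And>k. k < K \<Longrightarrow> g (Suc k) < g k"
  shows "card (g ` {..K}) = Suc K"
proof -
  have less: "- g i < - g j" if "i < j" "j \<le> K" for i j
    by (rule lift_Suc_mono_less_ivl[of "{..<K}"]) (use assms that in auto)
  have "inj_on g {..K}"
  proof (rule inj_onI)
    fix i j assume "i \<in> {..K}" "j \<in> {..K}" "g i = g j"
    then show "i = j" using less[of i j] less[of j i] by (cases i j rule: linorder_cases) auto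
  qed
  then show ?thesis by (simp add: card_image)
qed

lemma le_of_scaled_le:
  fixes a b c :: real
  assumes "1 \<le> c" and "0 \<le> a" and "c * a \<le> b"
  shows "a \<le> b"
  using mult_right_mono[OF assms(1,2)] assms(3) by simp

lemma slope_bound_of_gap:
  fixes s e :: real
  assumes s: "1 < s" and e: "0 \<le> e" and gap: "e * (s + 1)^2 < (s - 1)^2"
  shows "1 + e < (1 - e) * s"
proof -
  have "(s - 1)^2 < (s + 1)^2" using s by (intro power_strict_mono) auto
  with gap have "e * (s + 1)^2 < 1 * (s + 1)^2" by simp
  then have "e < 1" by (rule mult_right_less_imp_less) simp
  then have "e^2 \<le> e" using e by (simp add: power2_eq_square mult_left_le_one_le)
  then have "(e * (s + 1))^2 \<le> e * (s + 1)^2"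
    unfolding power_mult_distrib by (rule mult_right_mono) simp
  then have sq: "(e * (s + 1))^2 < (s - 1)^2" using gap by (rule le_less_trans)
  have "e * (s + 1) < s - 1" using power2_less_imp_less[OF sq] s by simp
  then show ?thesis by (simp add: algebra_simps)
qed

lemma geometric_triple_gap:
  fixes x y z s e :: real
  assumes y: "0 < y" and xy: "s * x \<le> y" and yz: "s * y \<le> z"
    and s: "1 < s" and e: "0 \<le> e" and gap: "e * (s + 1)^2 < (s - 1)^2"
  shows "(1 + e) * (x * z + y^2) < (1 - e) * (x + z) * y"
proof -
  note slope_s = slope_bound_of_gap[OF s e gap]
  have "(1 + e) * x * s \<le> (1 + e) * y" using mult_left_mono[OF xy, of "1 + e"] e by (simp add: mult_ac)
  also have "\<dots> < (1 - e) * s * y" using mult_strict_right_mono[OF slope_s y] by simp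
  finally have "(1 + e) * x * s < (1 - e) * y * s" by (simp add: mult_ac)
  then have slope: "(1 + e) * x < (1 - e) * y" using s by (simp add: mult_less_cancel_right)
  (* F is nondecreasing on [s y, z], and s F (s y) >= y^2 ((s - 1)^2 - e (s + 1)^2) > 0. *)
  define F where "F z' = (1 - e) * (x + z') * y - (1 + e) * (x * z' + y^2)" for z'
  have "F z - F (s * y) = (z - s * y) * ((1 - e) * y - (1 + e) * x)"
    unfolding F_def by (simp add: algebra_simps)
  moreover have "0 \<le> (z - s * y) * ((1 - e) * y - (1 + e) * x)"
    using slope yz by (intro mult_nonneg_nonneg) auto
  ultimately have F_mono: "F (s * y) \<le> F z" by linarith
  have "1 + e \<le> s * (1 + e)" using mult_right_mono[of 1 s "1 + e"] s e by simp
  then have "(1 - e) - s * (1 + e) \<le> 0" using e by linarith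
  then have "y * ((1 - e) - s * (1 + e)) \<le> s * x * ((1 - e) - s * (1 + e))"
    by (rule mult_right_mono_neg[OF xy])
  then have "y * (y * ((1 - e) - s * (1 + e))) \<le> y * (s * x * ((1 - e) - s * (1 + e)))"
    using y by (intro mult_left_mono) auto
  moreover have "s * F (s * y) - y^2 * ((s - 1)^2 - e * (s + 1)^2)
      = y * (s * x * ((1 - e) - s * (1 + e))) - y * (y * ((1 - e) - s * (1 + e)))"
    unfolding F_def by (simp add: power2_eq_square algebra_simps)
  moreover have "0 < y^2 * ((s - 1)^2 - e * (s + 1)^2)" using y gap by simp
  ultimately have "0 < s * F (s * y)" by linarith
  then have "0 < F (s * y)" using s by (simp add: zero_less_mult_iff)
  with F_mono have "0 < F z" by linarith
  then show ?thesis unfolding F_def by simp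
qed

lemma sqrt_chord_gap:
  fixes u v w s e :: real
  assumes u: "0 \<le> u" and v: "0 < v" and uv: "s^2 * u \<le> v" and vw: "s^2 * v \<le> w"
    and s: "1 < s" and e: "0 \<le> e" and gap: "e * (s + 1)^2 < (s - 1)^2"
  shows "(1 + e) * ((w - v) * sqrt u + (v - u) * sqrt w) < (1 - e) * (w - u) * sqrt v"
proof -
  have sqrt_scale: "s * sqrt a \<le> sqrt b" if "s^2 * a \<le> b" for a b
  proof -
    have "s * sqrt a = sqrt (s^2 * a)" using s by (simp add: real_sqrt_mult)
    also have "\<dots> \<le> sqrt b" using that by simp
    finally show ?thesis .
  qed
  define x y z where "x = sqrt u" and "y = sqrt v" and "z = sqrt w"
  have xy: "s * x \<le> y" and yz: "s * y \<le> z"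
    unfolding x_def y_def z_def using sqrt_scale uv vw by auto
  have y: "0 < y" unfolding y_def using v by simp
  have "x \<le> y" using le_of_scaled_le[OF _ _ xy] s u unfolding x_def by simp
  moreover have "y < s * y" using s y by simp
  ultimately have xz: "0 < z - x" using yz by linarith
  have "(1 + e) * (x * z + y^2) < (1 - e) * (x + z) * y"
    by (rule geometric_triple_gap[OF y xy yz s e gap])
  then have "0 < (z - x) * ((1 - e) * (x + z) * y - (1 + e) * (x * z + y^2))"
    using xz by simp
  also have "\<dots> = (1 - e) * (z^2 - x^2) * y - (1 + e) * ((z^2 - y^2) * x + (y^2 - x^2) * z)"
    by (simp add: power2_eq_square algebra_simps)
  finally show ?thesis
    unfolding x_def y_def z_def using u v vw s by (smt (verit) real_sqrt_pow2 zero_le_power2 mult_nonneg_nonneg)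
qed

lemma drop_of_sqrt_approximating_sums:
  fixes E :: "nat \<Rightarrow> real" and u v w :: nat and s e :: real
  assumes E: "antimono E"
    and Hu: "(\<Sum>i<u. E i) \<le> (1 + e) * sqrt u"
    and Hv: "(1 - e) * sqrt v \<le> (\<Sum>i<v. E i)"
    and Hw: "(\<Sum>i<w. E i) \<le> (1 + e) * sqrt w"
    and v: "0 < v" and uv: "s^2 * real u \<le> real v" and vw: "s^2 * real v \<le> real w"
    and s: "1 < s" and e: "0 \<le> e" and gap: "e * (s + 1)^2 < (s - 1)^2"
  shows "E w < E u"
proof (rule ccontr)
  assume no_drop: "\<not> E w < E u"
  have "1 \<le> s^2" using s by simp
  then have "u \<le> v" "v \<le> w"
    using le_of_scaled_le[OF _ _ uv] le_of_scaled_le[OF _ _ vw] by auto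
  then have "u \<le> w" by linarith
  have const: "E i = E u" if "u \<le> i" "i < w" for i
    using antimonoD[OF E, of u i] antimonoD[OF E, of i w] no_drop that by auto
  have H: "(\<Sum>i<p. E i) = (\<Sum>i<u. E i) + real (p - u) * E u" if "u \<le> p" "p \<le> w" for p
    using that by (intro sum_lessThan_constant_tail const) auto
  have "(real w - real u) * ((1 - e) * sqrt v) \<le> (real w - real u) * (\<Sum>i<v. E i)"
    using Hv \<open>u \<le> w\<close> by (intro mult_left_mono) auto
  also have "\<dots> = (real w - real v) * (\<Sum>i<u. E i) + (real v - real u) * (\<Sum>i<w. E i)"
    unfolding H[OF \<open>u \<le> v\<close> \<open>v \<le> w\<close>] H[OF \<open>u \<le> w\<close> order_refl]
    using \<open>u \<le> v\<close> \<open>v \<le> w\<close> by (simp add: of_nat_diff algebra_simps)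
  also have "\<dots> \<le> (real w - real v) * ((1 + e) * sqrt u) + (real v - real u) * ((1 + e) * sqrt w)"
    using Hu Hw \<open>u \<le> v\<close> \<open>v \<le> w\<close> by (intro add_mono mult_left_mono) auto
  finally have "(real w - real u) * ((1 - e) * sqrt v)
      \<le> (real w - real v) * ((1 + e) * sqrt u) + (real v - real u) * ((1 + e) * sqrt w)" .
  moreover have "(1 + e) * ((real w - real v) * sqrt u + (real v - real u) * sqrt w)
      < (1 - e) * (real w - real u) * sqrt v"
    using v by (intro sqrt_chord_gap[OF _ _ uv vw s e gap]) auto
  ultimately show False by (simp add: algebra_simps)
qed

lemma floor_ceiling_geometric_window:
  fixes t s :: real
  assumes t: "1 \<le> t" and s: "1 < s" and room: "s^2 + 1 \<le> t * s^4 * (s - 1)"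
  shows "1 \<le> nat \<lfloor>t\<rfloor>"
    and "s^2 * nat \<lfloor>t\<rfloor> \<le> nat \<lceil>s^2 * t\<rceil>"
    and "s^2 * nat \<lceil>s^2 * t\<rceil> \<le> nat \<lfloor>s^5 * t\<rfloor>"
proof -
  have "0 \<le> s^2 * t" using s t by simp
  then have ceil: "s^2 * t \<le> nat \<lceil>s^2 * t\<rceil>" "nat \<lceil>s^2 * t\<rceil> < s^2 * t + 1" by linarith+
  show "1 \<le> nat \<lfloor>t\<rfloor>" using t by linarith
  have "s^2 * nat \<lfloor>t\<rfloor> \<le> s^2 * t" by (intro mult_left_mono) (use t in linarith, simp)
  with ceil(1) show "s^2 * nat \<lfloor>t\<rfloor> \<le> nat \<lceil>s^2 * t\<rceil>" by linarith
  have "s^2 * nat \<lceil>s^2 * t\<rceil> \<le> s^2 * (s^2 * t + 1)" using ceil(2) by (intro mult_left_mono) auto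
  also have "\<dots> = s^4 * t + s^2" by (simp add: algebra_simps flip: power_add)
  also have "\<dots> \<le> s^5 * t - 1" using room by (simp add: algebra_simps flip: power_Suc)
  finally show "s^2 * nat \<lceil>s^2 * t\<rceil> \<le> nat \<lfloor>s^5 * t\<rfloor>" by linarith
qed

lemma drop_over_geometric_window:
  fixes E :: "nat \<Rightarrow> real" and n :: nat and s e t :: real
  assumes E: "antimono E"
    and lower: "\<And>p. 1 \<le> p \<Longrightarrow> p \<le> n \<Longrightarrow> (1 - e) * sqrt p \<le> (\<Sum>i<p. E i)"
    and upper: "\<And>p. 1 \<le> p \<Longrightarrow> p \<le> n \<Longrightarrow> (\<Sum>i<p. E i) \<le> (1 + e) * sqrt p"
    and s: "1 < s" and e: "0 \<le> e" and gap: "e * (s + 1)^2 < (s - 1)^2"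
    and t: "1 \<le> t" and room: "s^2 + 1 \<le> t * s^4 * (s - 1)" and top: "s^5 * t \<le> n"
  shows "E (nat \<lfloor>s^5 * t\<rfloor>) < E (nat \<lfloor>t\<rfloor>)"
proof -
  define u v w where "u = nat \<lfloor>t\<rfloor>" and "v = nat \<lceil>s^2 * t\<rceil>" and "w = nat \<lfloor>s^5 * t\<rfloor>"
  have u1: "1 \<le> u" and uv: "s^2 * real u \<le> real v" and vw: "s^2 * real v \<le> real w"
    using floor_ceiling_geometric_window[OF t s room] unfolding u_def v_def w_def by auto
  have "1 \<le> s^2" using s by simp
  then have "u \<le> v" "v \<le> w"
    using le_of_scaled_le[OF _ _ uv] le_of_scaled_le[OF _ _ vw] by simp_all
  moreover have "w \<le> n" using top unfolding w_def by linarith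
  ultimately have "1 \<le> v" "v \<le> n" "1 \<le> w" "w \<le> n" "u \<le> n" using u1 by linarith+
  then have "E w < E u"
    using drop_of_sqrt_approximating_sums[OF E upper lower upper _ uv vw s e gap] u1 by simp
  then show ?thesis unfolding u_def w_def .
qed

lemma card_values_ge_of_sqrt_approximating_sums:
  fixes E :: "nat \<Rightarrow> real" and n K :: nat and s e T :: real
  assumes E: "antimono E"
    and lower: "\<And>p. 1 \<le> p \<Longrightarrow> p \<le> n \<Longrightarrow> (1 - e) * sqrt p \<le> (\<Sum>i<p. E i)"
    and upper: "\<And>p. 1 \<le> p \<Longrightarrow> p \<le> n \<Longrightarrow> (\<Sum>i<p. E i) \<le> (1 + e) * sqrt p"
    and s: "1 < s" and e: "0 \<le> e" and gap: "e * (s + 1)^2 < (s - 1)^2"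
    and T: "1 \<le> T" and room: "s^2 + 1 \<le> T * s^4 * (s - 1)" and K: "T * s^(5 * K) \<le> n"
  shows "Suc K \<le> card (E ` {..n})"
proof -
  define t where "t k = T * s^(5 * k)" for k
  define u where "u k = nat \<lfloor>t k\<rfloor>" for k
  have t_mono: "t k \<le> t k'" if "k \<le> k'" for k k'
    unfolding t_def using s T that by (simp add: power_increasing)
  have u_le: "u k \<le> n" if "k \<le> K" for k
    using t_mono[OF that] K unfolding u_def t_def by linarith
  have "E (u (Suc k)) < E (u k)" if "k < K" for k
  proof -
    have "T \<le> t k" using t_mono[of 0 k] by (simp add: t_def)
    then have "T * (s^4 * (s - 1)) \<le> t k * (s^4 * (s - 1))"
      using s by (intro mult_right_mono) auto
    then have room_k: "s^2 + 1 \<le> t k * s^4 * (s - 1)" using room by (simp add: mult.assoc)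
    have step: "s^5 * t k = t (Suc k)" by (simp add: t_def power_add mult_ac)
    have "t (Suc k) \<le> n" using t_mono[of "Suc k" K] that K by (simp add: t_def)
    then have "E (nat \<lfloor>s^5 * t k\<rfloor>) < E (nat \<lfloor>t k\<rfloor>)"
      using \<open>T \<le> t k\<close> T step
      by (intro drop_over_geometric_window[OF E lower upper s e gap _ room_k]) simp_all
    then show ?thesis unfolding u_def step .
  qed
  then have "card ((E \<circ> u) ` {..K}) = Suc K"
    by (intro card_image_strict_decreasing_chain) simp
  moreover have "(E \<circ> u) ` {..K} \<subseteq> E ` {..n}" using u_le by auto
  ultimately show ?thesis by (metis card_mono finite_imageI finite_atMost)
qed

definition sqrt_gap :: "nat \<Rightarrow> real" where
  "sqrt_gap i = sqrt (real i) - sqrt (real i - 1)"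

definition sqrt_gap_set :: "nat \<Rightarrow> real set" where
  "sqrt_gap_set n = sqrt_gap ` {1..n}"

lemma sqrt_gap_eq_inverse:
  assumes "1 \<le> i"
  shows "sqrt_gap i = 1 / (sqrt (real i) + sqrt (real i - 1))"
proof -
  have "(sqrt (real i) - sqrt (real i - 1)) * (sqrt (real i) + sqrt (real i - 1)) = 1"
    using assms by (simp add: algebra_simps)
  moreover have "0 < sqrt (real i) + sqrt (real i - 1)" using assms by (simp add: add_pos_nonneg)
  ultimately show ?thesis unfolding sqrt_gap_def by (simp add: field_simps)
qed

lemma sqrt_gap_pos: "1 \<le> i \<Longrightarrow> 0 < sqrt_gap i"
  using sqrt_gap_eq_inverse[of i] by (simp add: add_pos_nonneg)

lemma sqrt_gap_strict_antimono:
  assumes "1 \<le> i" and "i < j"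
  shows "sqrt_gap j < sqrt_gap i"
proof -
  have "sqrt (real i) + sqrt (real i - 1) < sqrt (real j) + sqrt (real j - 1)"
    using assms by (intro add_strict_mono) auto
  moreover have "0 < sqrt (real i) + sqrt (real i - 1)" using assms by (simp add: add_pos_nonneg)
  ultimately show ?thesis
    using assms sqrt_gap_eq_inverse[of i] sqrt_gap_eq_inverse[of j] by (simp add: frac_less2)
qed

lemma sum_sqrt_gap: "(\<Sum>i=1..p. sqrt_gap i) = sqrt (real p)"
proof (induction p)
  case (Suc p)
  have "{1..Suc p} = insert (Suc p) {1..p}" by auto
  then show ?case using Suc by (simp add: sqrt_gap_def)
qed simp

lemma inj_on_sqrt_gap: "inj_on sqrt_gap {1..n}"
  by (rule inj_onI) (metis atLeastAtMost_iff sqrt_gap_strict_antimono less_irrefl linorder_neqE_nat)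

lemma finite_sqrt_gap_set: "finite (sqrt_gap_set n)"
  by (simp add: sqrt_gap_set_def)

lemma card_sqrt_gap_set: "card (sqrt_gap_set n) = n"
  unfolding sqrt_gap_set_def using card_image[OF inj_on_sqrt_gap] by simp

lemma dists_desc_sqrt_gap_set: "dists_desc (mset_set (sqrt_gap_set n)) 0 = map sqrt_gap [1..<Suc n]"
proof -
  have "mset_set {1..n} = mset [1..<Suc n]"
    by (metis atLeastLessThanSuc_atLeastAtMost distinct_upt mset_set_set set_upt)
  then have "mset_set (sqrt_gap_set n) = image_mset sqrt_gap (mset [1..<Suc n])"
    unfolding sqrt_gap_set_def image_mset_mset_set[OF inj_on_sqrt_gap, symmetric] by simp
  then have "image_mset (\<lambda>y. \<bar>y - 0\<bar>) (mset_set (sqrt_gap_set n))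
      = image_mset (\<lambda>i. \<bar>sqrt_gap i - 0\<bar>) (mset [1..<Suc n])"
    by (simp add: multiset.map_comp comp_def del: upt_Suc)
  also have "\<dots> = mset (map sqrt_gap [1..<Suc n])"
    unfolding mset_map
    by (rule image_mset_cong) (auto simp del: upt_Suc intro!: abs_of_pos sqrt_gap_pos)
  finally have dists: "image_mset (\<lambda>y. \<bar>y - 0\<bar>) (mset_set (sqrt_gap_set n))
      = mset (map sqrt_gap [1..<Suc n])" .
  have "sorted (rev (map sqrt_gap [1..<Suc n]))"
    unfolding sorted_wrt_rev sorted_wrt_map
    by (rule sorted_wrt_mono_rel[OF _ sorted_wrt_upt])
      (auto simp del: upt_Suc intro!: sqrt_gap_strict_antimono[THEN less_imp_le])
  then have "sort (map sqrt_gap [1..<Suc n]) = rev (map sqrt_gap [1..<Suc n])"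
    by (intro properties_for_sort) auto
  then show ?thesis
    unfolding dists_desc_def dists sorted_list_of_multiset_mset rev_rev_ident by simp
qed

lemma cost_sqrt_gap_set_at_0:
  assumes "p \<le> n"
  shows "cost p (mset_set (sqrt_gap_set n)) 0 = sqrt (real p)"
proof -
  have "cost p (mset_set (sqrt_gap_set n)) 0 = sum_list (take p (map sqrt_gap [1..<Suc n]))"
    unfolding cost_def dists_desc_def[symmetric] dists_desc_sqrt_gap_set ..
  also have "\<dots> = (\<Sum>i=1..p. sqrt_gap i)"
    using assms by (simp add: take_map sum_list_distinct_conv_sum_set atLeastLessThanSuc_atLeastAtMost
        del: upt_Suc)
  finally show ?thesis unfolding sum_sqrt_gap .
qed

lemma sqrt_gap_set_coreset_sum_bounds:
  assumes D: "simultaneous_coreset eps (sqrt_gap_set n) D" and p: "1 \<le> p" "p \<le> n"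
  shows "(1 - eps) * sqrt p \<le> (\<Sum>i<p. ranked_dist D 0 i)"
    and "(\<Sum>i<p. ranked_dist D 0 i) \<le> (1 + eps) * sqrt p"
proof -
  have "p \<in> {1..card (sqrt_gap_set n)}" using p by (simp add: card_sqrt_gap_set)
  then have "(1 - eps) * cost p (mset_set (sqrt_gap_set n)) 0 \<le> cost p D 0
      \<and> cost p D 0 \<le> (1 + eps) * cost p (mset_set (sqrt_gap_set n)) 0"
    using D unfolding simultaneous_coreset_def by blast
  then show "(1 - eps) * sqrt p \<le> (\<Sum>i<p. ranked_dist D 0 i)"
    and "(\<Sum>i<p. ranked_dist D 0 i) \<le> (1 + eps) * sqrt p"
    unfolding cost_sqrt_gap_set_at_0[OF p(2)] cost_eq_sum_ranked_dist[of p D] by auto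
qed

lemma geometric_scale_conditions:
  fixes r :: real
  assumes r: "0 < r" "r < 3/4"
  defines "s \<equiv> 1 + 8 * r" and "T \<equiv> 10 / r"
  shows "r^2 * (s + 1)^2 < (s - 1)^2"
    and "1 \<le> T"
    and "s^2 + 1 \<le> T * s^4 * (s - 1)"
proof -
  have "(2 + 8 * r)^2 < 8^2" using r by (intro power_strict_mono) auto
  then have "r^2 * (2 + 8 * r)^2 < r^2 * 8^2" using r by simp
  then show "r^2 * (s + 1)^2 < (s - 1)^2" unfolding s_def by (simp add: power_mult_distrib)
  show "1 \<le> T" unfolding T_def using r by simp
  have "s^2 < 7^2" unfolding s_def using r by (intro power_strict_mono) auto
  then have "s^2 < 49" by simp
  moreover have "1 \<le> s^4" unfolding s_def using r by simp
  moreover have "T * (s - 1) = 80" unfolding T_def s_def using r by simp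
  then have "T * s^4 * (s - 1) = 80 * s^4" by (metis mult.commute mult.left_commute)
  ultimately show "s^2 + 1 \<le> T * s^4 * (s - 1)" by linarith
qed

lemma geometric_scale_length:
  fixes n :: nat and r :: real
  assumes n: "exp 100 \<le> real n" and r: "real n powr (-1/6) < r" "r < 3/4"
  defines "s \<equiv> 1 + 8 * r" and "T \<equiv> 10 / r"
  obtains K :: nat where "T * s^(5 * K) \<le> real n" and "ln (real n) / (200 * r) \<le> real K"
proof -
  define K where "K = nat \<lfloor>ln (real n / T) / (40 * r)\<rfloor>"
  have n_pos: "0 < real n" using n exp_gt_zero[of 100] by linarith
  have ln_n: "100 \<le> ln (real n)" using n n_pos by (metis ln_exp ln_le_cancel_iff exp_gt_zero)
  have "0 < real n powr (-1/6)" using n_pos by simp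
  then have r_pos: "0 < r" using r(1) by linarith
  have "ln (real n powr (-1/6)) < ln r"
    using r(1) n_pos r_pos by (subst ln_less_cancel_iff) auto
  then have ln_r: "- (1/6) * ln (real n) < ln r" by (simp only: ln_powr)
  have "ln (10::real) \<le> 9" using ln_le_minus_one[of "10::real"] by simp
  then have A: "5/6 * ln (real n) - 9 \<le> ln (real n / T)"
    unfolding T_def using n_pos r_pos ln_r by (simp add: ln_div ln_mult)
  then have "0 \<le> ln (real n / T) / (40 * r)" using ln_n r_pos by simp
  then have K: "real K \<le> ln (real n / T) / (40 * r)" "ln (real n / T) / (40 * r) - 1 \<le> real K"
    unfolding K_def by linarith+
  have "s^(5 * K) \<le> exp (8 * r) ^ (5 * K)"
    unfolding s_def using r_pos exp_ge_add_one_self[of "8 * r"] by (intro power_mono) auto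
  also have "\<dots> = exp (real K * (40 * r))" by (simp add: exp_of_nat_mult[symmetric] mult_ac)
  also have "\<dots> \<le> exp (ln (real n / T))"
    using K(1) r_pos by (simp add: pos_le_divide_eq)
  also have "\<dots> = real n / T" unfolding T_def using n_pos r_pos by simp
  finally have top: "T * s^(5 * K) \<le> real n" unfolding T_def using r_pos by (simp add: field_simps)
  have "ln (real n) / (200 * r) \<le> ln (real n / T) / (40 * r) - 1"
    using A ln_n r_pos r(2) by (simp add: field_simps)
  with K(2) have "ln (real n) / (200 * r) \<le> real K" by linarith
  with top show thesis by (rule that)
qed

lemma sqrt_gap_set_coreset_size_lower_bound:
  fixes n :: nat and eps :: real
  assumes n: "exp 100 \<le> real n" and eps: "real n powr (-1/3) < eps" "eps < 1/2"
    and D: "simultaneous_coreset eps (sqrt_gap_set n) D"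
  shows "ln (real n) / (200 * sqrt eps) \<le> real (coreset_size D)"
proof -
  define r where "r = sqrt eps"
  have n_pos: "0 < real n" using n exp_gt_zero[of 100] by linarith
  have "0 < real n powr (-1/3)" using n_pos by simp
  then have eps_pos: "0 < eps" using eps(1) by linarith
  have r: "0 < r" "r^2 = eps" unfolding r_def using eps_pos by simp_all
  have "r^2 < (3/4)^2" using r(2) eps(2) by (simp add: power2_eq_square)
  then have r_upper: "r < 3/4" by (rule power2_less_imp_less) simp
  have "real n powr (-1/6) = sqrt (real n powr (-1/3))"
    by (simp add: powr_powr flip: powr_half_sqrt)
  then have r_lower: "real n powr (-1/6) < r" unfolding r_def using eps(1) by simp
  obtain K where K: "10 / r * (1 + 8 * r)^(5 * K) \<le> real n" "ln (real n) / (200 * r) \<le> real K"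
    using geometric_scale_length[OF n r_lower r_upper] by blast
  note scale = geometric_scale_conditions[OF r(1) r_upper, unfolded r(2)]
  have "Suc K \<le> card (ranked_dist D 0 ` {..n})"
    using r(1) eps_pos
    by (intro card_values_ge_of_sqrt_approximating_sums[OF antimono_ranked_dist
          sqrt_gap_set_coreset_sum_bounds(1)[OF D] sqrt_gap_set_coreset_sum_bounds(2)[OF D]
          _ _ scale K(1)])
      auto
  also have "\<dots> \<le> Suc (coreset_size D)"
    unfolding coreset_size_def by (rule card_image_ranked_dist_le)
  finally show ?thesis using K(2) unfolding r_def by simp
qed

theorem theorem4p9:
  shows "\<exists>c::real > 0. \<exists>n0::nat. \<forall>n::nat \<ge> n0. \<forall>eps::real.
           real n powr (-1/3) < eps \<and> eps < 1/2 \<longrightarrow>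
           (\<exists>X::real set. finite X \<and> card X = n \<and>
              (\<forall>D. simultaneous_coreset eps X D \<longrightarrow>
                   real (coreset_size D) \<ge> c * eps powr (-1/2) * ln (real n)))"
proof (intro exI[of _ "1/200::real"] conjI exI[of _ "nat \<lceil>exp (100::real)\<rceil>"] allI impI)
  fix n :: nat and eps :: real
  assume "nat \<lceil>exp (100::real)\<rceil> \<le> n" and eps: "real n powr (-1/3) < eps \<and> eps < 1/2"
  then have n: "exp 100 \<le> real n" by (simp add: nat_ceiling_le_eq)
  have "0 < real n" using n exp_gt_zero[of 100] by linarith
  then have "0 < eps" using eps powr_gt_zero[of "real n" "-1/3"] by linarith
  then have bound: "1/200 * eps powr (-1/2) * ln (real n) = ln (real n) / (200 * sqrt eps)"
    by (simp add: powr_minus_divide flip: powr_half_sqrt)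
  show "\<exists>X::real set. finite X \<and> card X = n \<and>
      (\<forall>D. simultaneous_coreset eps X D \<longrightarrow>
        real (coreset_size D) \<ge> 1/200 * eps powr (-1/2) * ln (real n))"
    unfolding bound using sqrt_gap_set_coreset_size_lower_bound[OF n] eps
    by (intro exI[of _ "sqrt_gap_set n"] conjI allI impI finite_sqrt_gap_set card_sqrt_gap_set) blast
qed simp

end
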